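(* Let $\mathbb{F}\in\{\mathbb{R},\mathbb{C}\}$, let $m\le n\le 2m$, and let $\ell$ be an integer with $n-m\le\ell\le\lfloor n/2\rfloor$. Let $X_{11}$, $X_{22}$, $Y$ be nonsingular matrices over $\mathbb{F}$ of sizes $(n-\ell)\times(n-\ell)$, $(m+\ell-n)\times(m+\ell-n)$ and $\ell\times\ell$ respectively, and let $X_{12}$ be an arbitrary $(n-\ell)\times(m+\ell-n)$ matrix over $\mathbb{F}$. Define the $m\times n$ matrices $$A=\begin{pmatrix}X_{11}&X_{12}&O\\ O&X_{22}&O\end{pmatrix},\qquad B=\begin{pmatrix}O&Y\\ O&O\end{pmatrix},$$ where in $A$ the row blocks have sizes $n-\ell$, $m+\ell-n$ and the column blocks have sizes $n-\ell$, $m+\ell-n$, $n-m$, and in $B$ the row blocks have sizes $\ell$, $m-\ell$ and the column blocks have sizes $n-\ell$, $\ell$. Then $\mathrm{rank}_{\mathbb{F}}(A;B)=m+\ell$.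
   Context: $(A;B)$ denotes the $m\times n\times 2$ tensor with slices $A,B$. A rank-one such tensor has the form $(\alpha\,\mathbf{a}\mathbf{b}^T;\beta\,\mathbf{a}\mathbf{b}^T)$ with nonzero $\mathbf{a}\in\mathbb{F}^m$, $\mathbf{b}\in\mathbb{F}^n$, $(\alpha,\beta)\ne0$; $\mathrm{rank}_{\mathbb{F}}$ is the minimal number of rank-one tensors over $\mathbb{F}$ summing slicewise to the tensor. *)

theory Defs
  imports Complex_Main "Jordan_Normal_Form.Matrix"
begin

text \<open>Vectors are represented as functions on
  the index ranges {0..<m}, {0..<n}.  A and B are assumed to have the same size.\<close>
definition tensor_rank :: "'a::field mat \<Rightarrow> 'a mat \<Rightarrow> nat" where
  "tensor_rank A B = (LEAST r. \<exists>(a :: nat \<Rightarrow> nat \<Rightarrow> 'a) (b :: nat \<Rightarrow> nat \<Rightarrow> 'a)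
       (\<alpha> :: nat \<Rightarrow> 'a) (\<beta> :: nat \<Rightarrow> 'a).
     (\<forall>k<r. (\<exists>i<dim_row A. a k i \<noteq> 0) \<and> (\<exists>j<dim_col A. b k j \<noteq> 0)
             \<and> (\<alpha> k, \<beta> k) \<noteq> (0, 0)) \<and>
     (\<forall>i<dim_row A. \<forall>j<dim_col A.
        A $$ (i, j) = (\<Sum>k<r. \<alpha> k * a k i * b k j) \<and>
        B $$ (i, j) = (\<Sum>k<r. \<beta> k * a k i * b k j)))"

text \<open>A = [X11 X12 O; O X22 O] with row blocks n-l, m+l-n and column blocks
  n-l, m+l-n, n-m.\<close>
definition blockA :: "nat \<Rightarrow> nat \<Rightarrow> nat \<Rightarrow> 'a::zero mat \<Rightarrow> 'a mat \<Rightarrow> 'a mat \<Rightarrow> 'a mat" where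
  "blockA m n l X11 X12 X22 =
     four_block_mat
       (four_block_mat X11 X12 (0\<^sub>m (m + l - n) (n - l)) X22)
       (0\<^sub>m m (n - m))
       (0\<^sub>m 0 m)
       (0\<^sub>m 0 (n - m))"

definition blockB :: "nat \<Rightarrow> nat \<Rightarrow> nat \<Rightarrow> 'a::zero mat \<Rightarrow> 'a mat" where
  "blockB m n l Y =
     four_block_mat (0\<^sub>m l (n - l)) Y (0\<^sub>m (m - l) (n - l)) (0\<^sub>m (m - l) l)"

end

theory Submission
  imports Defs
begin

(*
  Upper bound: every row of A and every nonzero row of B (these are the first l rows)
  gives one rank-one term, so m + l terms suffice.

  Lower bound, by the substitution method: given a decomposition into r rank-one terms
  (alpha_k a_k b_k^T; beta_k a_k b_k^T), eliminate the rows l..m-1 of the pencil one at a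
  time.  Each elimination step uses a term k0 whose vector a_k0 has a nonzero entry at the
  eliminated row and removes that term, so r drops by one per row.  What is left of the first
  l rows must still span the 2l independent directions (A-part and B-part separately), and a
  dimension count gives 2l further terms, hence r >= (m - l) + 2l.
*)

lemma sum_lessThan_add:
  fixes f :: "nat \<Rightarrow> 'a::comm_monoid_add"
  shows "(\<Sum>i<p+q. f i) = (\<Sum>i<p. f i) + (\<Sum>i<q. f (p+i))"
  by (induction q) (auto simp: add.assoc)

lemma sum_lessThan_if_less:
  fixes f :: "nat \<Rightarrow> 'a::comm_monoid_add"
  assumes "p \<le> m"
  shows "(\<Sum>i<m. if i < p then f i else 0) = (\<Sum>i<p. f i)"
proof -
  obtain q where "m = p + q" using assms le_Suc_ex by blast
  then show ?thesis by (simp add: sum_lessThan_add)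
qed

lemma sum_indicator_mult:
  fixes f :: "nat \<Rightarrow> 'a::comm_semiring_1"
  assumes "finite I" "i0 \<in> I"
  shows "(\<Sum>i\<in>I. (if i = i0 then t else 0) * f i) = t * f i0"
proof -
  have "(\<Sum>i\<in>I. (if i = i0 then t else 0) * f i) = (\<Sum>i\<in>I. if i = i0 then t * f i else 0)"
    by (rule sum.cong) auto
  then show ?thesis using assms by simp
qed

(* With t = r this is
   linear independence of the (truncated) rows. *)
definition row_independent :: "'a::field mat \<Rightarrow> nat \<Rightarrow> nat \<Rightarrow> nat \<Rightarrow> bool" where
  "row_independent M r c t \<longleftrightarrow>
     (\<forall>y. (\<forall>j<c. (\<Sum>i<r. y i * M $$ (i,j)) = 0) \<longrightarrow> (\<forall>i<t. y i = 0))"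

lemma row_independent_invertible:
  fixes M :: "'a::field mat"
  assumes "M \<in> carrier_mat d d" "invertible_mat M"
  shows "row_independent M d d d"
  unfolding row_independent_def
proof (intro allI impI)
  fix y k assume null: "\<forall>j<d. (\<Sum>i<d. y i * M $$ (i,j)) = 0" and k: "k < d"
  obtain N where MN: "M * N = 1\<^sub>m d" and NM: "N * M = 1\<^sub>m (dim_row N)"
    using assms unfolding invertible_mat_def inverts_mat_def by auto
  have dN: "dim_col N = d" "dim_row N = d"
    using MN NM assms(1) by (metis carrier_matD(2) index_mult_mat(3) index_one_mat(3))+
  have "y k = (\<Sum>i<d. y i * (1\<^sub>m d) $$ (i,k))"
    using k by (simp add: if_distrib cong: if_cong)
  also have "\<dots> = (\<Sum>i<d. y i * (\<Sum>j<d. M $$ (i,j) * N $$ (j,k)))"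
    using assms(1) k dN
    by (auto simp: MN[symmetric] scalar_prod_def atLeast0LessThan intro!: sum.cong)
  also have "\<dots> = (\<Sum>j<d. (\<Sum>i<d. y i * M $$ (i,j)) * N $$ (j,k))"
    by (simp add: sum_distrib_left sum_distrib_right mult.assoc) (rule sum.swap)
  also have "\<dots> = 0" using null by simp
  finally show "y k = 0" .
qed

lemma row_independent_nonzero_row:
  fixes M :: "'a::field mat"
  assumes "row_independent M r c t" "i < t" "i < r"
  shows "\<exists>j<c. M $$ (i,j) \<noteq> 0"
proof (rule ccontr)
  assume zero_row: "\<not> ?thesis"
  define y :: "nat \<Rightarrow> 'a" where "y i' = (if i' = i then 1 else 0)" for i'
  have "(\<Sum>i'<r. y i' * M $$ (i',j)) = M $$ (i,j)" for j
    using sum_indicator_mult[of "{..<r}" i 1 "\<lambda>i'. M $$ (i',j)"] assms(3) by (simp add: y_def)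
  then have "y i = 0"
    using zero_row assms(1,2) unfolding row_independent_def by auto
  then show False by (simp add: y_def)
qed

lemma row_independent_mono:
  assumes "row_independent M r c t" "c \<le> c'" "t' \<le> t"
  shows "row_independent M r c' t'"
  unfolding row_independent_def
proof (intro allI impI)
  fix y i assume "\<forall>j<c'. (\<Sum>i<r. y i * M $$ (i,j)) = 0" "i < t'"
  then show "y i = 0"
    using assms(1)[unfolded row_independent_def, rule_format, of y i] assms(2,3) by simp
qed

lemma row_independent_block:
  fixes M X :: "'a::field mat"
  assumes X: "X \<in> carrier_mat t t" "invertible_mat X" and "t \<le> r"
    and block: "\<forall>i<t. \<forall>j<t. M $$ (i, s+j) = X $$ (i,j)"
    and below: "\<forall>i<r. \<forall>j<t. t \<le> i \<longrightarrow> M $$ (i, s+j) = 0"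
  shows "row_independent M r (s+t) t"
  unfolding row_independent_def
proof (rule allI, rule impI)
  fix y assume null: "\<forall>j<s+t. (\<Sum>i<r. y i * M $$ (i,j)) = 0"
  have "(\<Sum>i<t. y i * X $$ (i,j)) = 0" if "j < t" for j
  proof -
    have "(\<Sum>i<r. y i * M $$ (i,s+j)) = (\<Sum>i<r. if i < t then y i * X $$ (i,j) else 0)"
      using block below that by (intro sum.cong refl) auto
    also have "\<dots> = (\<Sum>i<t. y i * X $$ (i,j))" using \<open>t \<le> r\<close> by (rule sum_lessThan_if_less)
    finally show ?thesis using null that by simp
  qed
  then show "\<forall>i<t. y i = 0"
    using row_independent_invertible[OF X] unfolding row_independent_def by blast
qed

lemma row_independent_block_triangular:
  fixes M Z :: "'a::field mat"
  assumes top: "row_independent M (p+q) p p"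
    and Z: "Z \<in> carrier_mat q q" "invertible_mat Z"
    and block: "\<forall>i<q. \<forall>j<q. M $$ (p+i, p+j) = Z $$ (i,j)"
  shows "row_independent M (p+q) (p+q) (p+q)"
  unfolding row_independent_def
proof (intro allI impI)
  fix y k assume null: "\<forall>j<p+q. (\<Sum>i<p+q. y i * M $$ (i,j)) = 0" and k: "k < p+q"
  have y_top: "y i = 0" if "i < p" for i
    using top[unfolded row_independent_def, rule_format, of y i] null that by simp
  have "(\<Sum>i<q. y (p+i) * Z $$ (i,j)) = 0" if "j < q" for j
  proof -
    have "(\<Sum>i<p+q. y i * M $$ (i,p+j)) = (\<Sum>i<q. y (p+i) * M $$ (p+i,p+j))"
      using y_top by (simp add: sum_lessThan_add)
    also have "\<dots> = (\<Sum>i<q. y (p+i) * Z $$ (i,j))"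
      using block that by simp
    finally show ?thesis using null that by simp
  qed
  then have y_bottom: "y (p+i) = 0" if "i < q" for i
    using row_independent_invertible[OF Z, unfolded row_independent_def, rule_format,
        of "\<lambda>i. y (p+i)" i] that by simp
  show "y k = 0"
  proof (cases "k < p")
    case False
    then have "k = p + (k - p)" "k - p < q" using k by auto
    then show ?thesis using y_bottom by metis
  qed (use y_top in simp)
qed

(* Counting dimensions: |J| linearly independent vectors in F^K force |J| <= |K|.  Proved by
   Gaussian elimination on one coordinate at a time. *)
lemma card_le_of_independent:
  fixes g :: "'j \<Rightarrow> 'k \<Rightarrow> 'a::field"
  assumes "finite K" "finite J"
    and "\<forall>w. (\<forall>k\<in>K. (\<Sum>j\<in>J. w j * g j k) = 0) \<longrightarrow> (\<forall>j\<in>J. w j = 0)"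
  shows "card J \<le> card K"
  using assms
proof (induction K arbitrary: J g rule: finite_induct)
  case empty
  then show ?case by (auto dest: spec[of _ "\<lambda>_. 1"])
next
  case (insert k0 K)
  show ?case
  proof (cases "\<forall>j\<in>J. g j k0 = 0")
    case True
    then have "card J \<le> card K"
      using insert.IH insert.prems by auto
    then show ?thesis using insert.hyps by simp
  next
    case False
    then obtain j0 where j0: "j0 \<in> J" "g j0 k0 \<noteq> 0" by auto
    define g' where "g' j k = g j k - g j k0 / g j0 k0 * g j0 k" for j k
    have "\<forall>w. (\<forall>k\<in>K. (\<Sum>j\<in>J-{j0}. w j * g' j k) = 0) \<longrightarrow> (\<forall>j\<in>J-{j0}. w j = 0)"
    proof (intro allI impI)
      fix w assume null: "\<forall>k\<in>K. (\<Sum>j\<in>J-{j0}. w j * g' j k) = 0"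
      define W where "W j = (if j = j0 then - (\<Sum>j\<in>J-{j0}. w j * g j k0) / g j0 k0 else w j)" for j
      have lift: "(\<Sum>j\<in>J. W j * g j k) = (\<Sum>j\<in>J-{j0}. w j * g' j k)" for k
      proof -
        have "(\<Sum>j\<in>J. W j * g j k) = W j0 * g j0 k + (\<Sum>j\<in>J-{j0}. w j * g j k)"
          using j0(1) insert.prems(1) by (simp add: sum.remove W_def)
        moreover have "(\<Sum>j\<in>J-{j0}. w j * g' j k)
            = (\<Sum>j\<in>J-{j0}. w j * g j k) - (\<Sum>j\<in>J-{j0}. w j * g j k0) * g j0 k / g j0 k0"
          by (simp add: g'_def right_diff_distrib sum_subtractf sum_divide_distrib
              sum_distrib_left sum_distrib_right mult_ac)
        ultimately show ?thesis by (simp add: W_def)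
      qed
      have "\<forall>k\<in>insert k0 K. (\<Sum>j\<in>J. W j * g j k) = 0"
        using null lift j0(2) by (auto simp: g'_def)
      then have "\<forall>j\<in>J. W j = 0" using insert.prems(2) by blast
      then show "\<forall>j\<in>J-{j0}. w j = 0" unfolding W_def by (metis DiffE singletonI)
    qed
    then have "card (J - {j0}) \<le> card K" using insert.IH insert.prems(1) by blast
    then show ?thesis using insert.hyps j0(1) insert.prems(1)
      by (simp add: card_Diff_singleton)
  qed
qed

(* For a decomposition M = sum_k gamma_k a_k b_k^T (indices k in K, rows in I) this is the
   j-th entry of y^T M, expressed through the decomposition. *)
definition dec_left_mult ::
    "nat set \<Rightarrow> nat set \<Rightarrow> (nat \<Rightarrow> nat \<Rightarrow> 'a) \<Rightarrow> (nat \<Rightarrow> 'a) \<Rightarrow> (nat \<Rightarrow> nat \<Rightarrow> 'a)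
      \<Rightarrow> (nat \<Rightarrow> 'a) \<Rightarrow> nat \<Rightarrow> 'a::field" where
  "dec_left_mult I K a \<gamma> b y j = (\<Sum>k\<in>K. \<gamma> k * (\<Sum>i\<in>I. y i * a k i) * b k j)"

(* The coefficient vector sum_{i in R} u_i (e_i + c_i): a combination of the rows in R,
   each perturbed by the row combination c_i. *)
definition perturbed_comb :: "nat set \<Rightarrow> (nat \<Rightarrow> 'a) \<Rightarrow> (nat \<Rightarrow> nat \<Rightarrow> 'a) \<Rightarrow> nat \<Rightarrow> 'a::comm_ring_1" where
  "perturbed_comb R u c j = (if j \<in> R then u j else 0) + (\<Sum>i\<in>R. u i * c i j)"

definition dec_rows_independent ::
    "nat set \<Rightarrow> nat set \<Rightarrow> nat set \<Rightarrow> (nat \<Rightarrow> nat \<Rightarrow> 'a::field) \<Rightarrow> (nat \<Rightarrow> 'a) \<Rightarrow> (nat \<Rightarrow> nat \<Rightarrow> 'a)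
      \<Rightarrow> bool" where
  "dec_rows_independent S I K a \<gamma> b \<longleftrightarrow>
     (\<forall>y. (\<forall>i. i \<notin> S \<longrightarrow> y i = 0) \<longrightarrow> (\<forall>j. dec_left_mult I K a \<gamma> b y j = 0) \<longrightarrow> (\<forall>i. y i = 0))"

(* The rows in R of the two slices stay jointly independent (A-part and B-part separately)
   even after perturbing them by arbitrary combinations of the rows in S. *)
definition dec_pairs_independent ::
    "nat set \<Rightarrow> nat set \<Rightarrow> nat set \<Rightarrow> nat set \<Rightarrow> (nat \<Rightarrow> nat \<Rightarrow> 'a::field) \<Rightarrow> (nat \<Rightarrow> 'a) \<Rightarrow> (nat \<Rightarrow> 'a)
      \<Rightarrow> (nat \<Rightarrow> nat \<Rightarrow> 'a) \<Rightarrow> bool" where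
  "dec_pairs_independent R S I K a \<alpha> \<beta> b \<longleftrightarrow>
     (\<forall>c u v. (\<forall>i\<in>R. \<forall>j. j \<notin> S \<longrightarrow> c i j = 0) \<longrightarrow>
        (\<forall>j. dec_left_mult I K a \<alpha> b (perturbed_comb R u c) j
              + dec_left_mult I K a \<beta> b (perturbed_comb R v c) j = 0) \<longrightarrow>
        (\<forall>i\<in>R. u i = 0 \<and> v i = 0))"

definition eliminate :: "(nat \<Rightarrow> nat \<Rightarrow> 'a) \<Rightarrow> nat \<Rightarrow> nat \<Rightarrow> nat \<Rightarrow> nat \<Rightarrow> 'a::field" where
  "eliminate a k0 i0 = (\<lambda>k i. a k i - a k0 i * a k i0 / a k0 i0)"

(* The corresponding change of coefficient vectors: shift the coefficient at i0 so that
   the combination becomes orthogonal to a_k0. *)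
definition pivot_shift ::
    "nat set \<Rightarrow> (nat \<Rightarrow> nat \<Rightarrow> 'a) \<Rightarrow> nat \<Rightarrow> nat \<Rightarrow> (nat \<Rightarrow> 'a) \<Rightarrow> nat \<Rightarrow> 'a::field" where
  "pivot_shift I a k0 i0 y =
     (\<lambda>i. y i - (if i = i0 then (\<Sum>i\<in>I. y i * a k0 i) / a k0 i0 else 0))"

lemma dec_left_mult_eliminate:
  fixes a :: "nat \<Rightarrow> nat \<Rightarrow> 'a::field"
  assumes "finite K" "k0 \<in> K" "finite I" "i0 \<in> I" "a k0 i0 \<noteq> 0"
  shows "dec_left_mult I (K - {k0}) (eliminate a k0 i0) \<gamma> b y j
       = dec_left_mult I K a \<gamma> b (pivot_shift I a k0 i0 y) j"
proof -
  let ?t = "(\<Sum>i\<in>I. y i * a k0 i) / a k0 i0"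
  have shifted: "(\<Sum>i\<in>I. pivot_shift I a k0 i0 y i * a k i) = (\<Sum>i\<in>I. y i * a k i) - ?t * a k i0"
    for k
    by (simp add: pivot_shift_def left_diff_distrib sum_subtractf sum_indicator_mult[OF assms(3,4)])
  have eliminated: "(\<Sum>i\<in>I. y i * eliminate a k0 i0 k i) = (\<Sum>i\<in>I. y i * a k i) - ?t * a k i0"
    for k
  proof -
    have "(\<Sum>i\<in>I. y i * eliminate a k0 i0 k i)
        = (\<Sum>i\<in>I. y i * a k i - (y i * a k0 i) * (a k i0 / a k0 i0))"
      by (rule sum.cong) (auto simp: eliminate_def algebra_simps)
    also have "\<dots> = (\<Sum>i\<in>I. y i * a k i) - (\<Sum>i\<in>I. y i * a k0 i) * (a k i0 / a k0 i0)"
      by (simp only: sum_subtractf sum_distrib_right)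
    finally show ?thesis by simp
  qed
  have "dec_left_mult I K a \<gamma> b (pivot_shift I a k0 i0 y) j
     = \<gamma> k0 * (\<Sum>i\<in>I. pivot_shift I a k0 i0 y i * a k0 i) * b k0 j
       + dec_left_mult I (K - {k0}) a \<gamma> b (pivot_shift I a k0 i0 y) j"
    unfolding dec_left_mult_def by (rule sum.remove[OF assms(1,2)])
  also have "(\<Sum>i\<in>I. pivot_shift I a k0 i0 y i * a k0 i) = 0"
    using assms(5) by (simp add: shifted)
  also have "dec_left_mult I (K - {k0}) a \<gamma> b (pivot_shift I a k0 i0 y) j
      = dec_left_mult I (K - {k0}) (eliminate a k0 i0) \<gamma> b y j"
    unfolding dec_left_mult_def shifted eliminated ..
  finally show ?thesis by simp
qed

lemma perturbed_comb_dot: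
  fixes a :: "nat \<Rightarrow> 'a::field"
  assumes "finite I" "finite R" "R \<subseteq> I"
  shows "(\<Sum>i'\<in>I. perturbed_comb R u c i' * a i') = (\<Sum>i\<in>R. u i * (a i + (\<Sum>i'\<in>I. c i i' * a i')))"
proof -
  have "(\<Sum>i'\<in>I. perturbed_comb R u c i' * a i')
      = (\<Sum>i'\<in>I. (if i' \<in> R then u i' * a i' else 0)) + (\<Sum>i'\<in>I. \<Sum>i\<in>R. u i * c i i' * a i')"
    unfolding sum.distrib[symmetric]
    by (rule sum.cong) (auto simp: perturbed_comb_def distrib_right sum_distrib_right)
  also have "(\<Sum>i'\<in>I. (if i' \<in> R then u i' * a i' else 0)) = (\<Sum>i\<in>R. u i * a i)"
    using assms by (simp add: sum.If_cases Int_absorb1)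
  also have "(\<Sum>i'\<in>I. \<Sum>i\<in>R. u i * c i i' * a i') = (\<Sum>i\<in>R. u i * (\<Sum>i'\<in>I. c i i' * a i'))"
    by (subst sum.swap) (simp add: sum_distrib_left mult.assoc)
  finally show ?thesis by (simp add: distrib_left sum.distrib)
qed

lemma pivot_shift_perturbed_comb:
  fixes a :: "nat \<Rightarrow> nat \<Rightarrow> 'a::field"
  assumes "finite I" "finite R" "R \<subseteq> I"
  shows "pivot_shift I a k0 i0 (perturbed_comb R u c)
       = perturbed_comb R u (\<lambda>i j. c i j
           - (if j = i0 then (a k0 i + (\<Sum>i'\<in>I. c i i' * a k0 i')) / a k0 i0 else 0))"
proof
  fix j
  show "pivot_shift I a k0 i0 (perturbed_comb R u c) j = perturbed_comb R u (\<lambda>i j. c i j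
           - (if j = i0 then (a k0 i + (\<Sum>i'\<in>I. c i i' * a k0 i')) / a k0 i0 else 0)) j"
    unfolding pivot_shift_def perturbed_comb_dot[OF assms]
    by (cases "j = i0")
      (simp_all add: perturbed_comb_def right_diff_distrib sum_subtractf sum_divide_distrib)
qed

lemma pivot_exists:
  fixes a :: "nat \<Rightarrow> nat \<Rightarrow> 'a::field"
  assumes "finite I" "i0 \<in> I" "dec_rows_independent (insert i0 S) I K a \<gamma> b"
  shows "\<exists>k0\<in>K. a k0 i0 \<noteq> 0"
proof (rule ccontr)
  assume "\<not> ?thesis"
  then have zero: "\<forall>k\<in>K. a k i0 = 0" by auto
  define e :: "nat \<Rightarrow> 'a" where "e i = (if i = i0 then 1 else 0)" for i
  have "(\<Sum>i\<in>I. e i * a k i) = a k i0" for k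
    unfolding e_def using sum_indicator_mult[OF assms(1,2), of 1] by simp
  then have "\<forall>j. dec_left_mult I K a \<gamma> b e j = 0" using zero by (simp add: dec_left_mult_def)
  moreover have "\<forall>i. i \<notin> insert i0 S \<longrightarrow> e i = 0" by (simp add: e_def)
  ultimately have "e i0 = 0" using assms(3)[unfolded dec_rows_independent_def, rule_format, of e] by blast
  then show False by (simp add: e_def)
qed

lemma dec_rows_independent_eliminate:
  fixes a :: "nat \<Rightarrow> nat \<Rightarrow> 'a::field"
  assumes "finite K" "k0 \<in> K" "finite I" "i0 \<in> I" "a k0 i0 \<noteq> 0" "i0 \<notin> S"
    and indep: "dec_rows_independent (insert i0 S) I K a \<gamma> b"
  shows "dec_rows_independent S I (K - {k0}) (eliminate a k0 i0) \<gamma> b"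
  unfolding dec_rows_independent_def
proof (intro allI impI)
  fix y i
  assume supp: "\<forall>i. i \<notin> S \<longrightarrow> y i = 0"
    and null: "\<forall>j. dec_left_mult I (K - {k0}) (eliminate a k0 i0) \<gamma> b y j = 0"
  have "\<forall>i. i \<notin> insert i0 S \<longrightarrow> pivot_shift I a k0 i0 y i = 0"
    using supp by (simp add: pivot_shift_def)
  moreover have "\<forall>j. dec_left_mult I K a \<gamma> b (pivot_shift I a k0 i0 y) j = 0"
    using null by (simp add: dec_left_mult_eliminate[where a=a, OF assms(1-5)])
  ultimately have shift0: "pivot_shift I a k0 i0 y i = 0"
    using indep[unfolded dec_rows_independent_def, rule_format, of "pivot_shift I a k0 i0 y"] by blast
  show "y i = 0"
  proof (cases "i = i0")
    case True
    then show ?thesis using supp assms(6) by simp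
  next
    case False
    then show ?thesis using shift0 by (simp add: pivot_shift_def)
  qed
qed

lemma dec_pairs_independent_eliminate:
  fixes a :: "nat \<Rightarrow> nat \<Rightarrow> 'a::field"
  assumes "finite K" "k0 \<in> K" "finite I" "i0 \<in> I" "a k0 i0 \<noteq> 0" "R \<subseteq> I"
    and indep: "dec_pairs_independent R (insert i0 S) I K a \<alpha> \<beta> b"
  shows "dec_pairs_independent R S I (K - {k0}) (eliminate a k0 i0) \<alpha> \<beta> b"
  unfolding dec_pairs_independent_def
proof (intro allI impI)
  fix c u v
  assume supp: "\<forall>i\<in>R. \<forall>j. j \<notin> S \<longrightarrow> c i j = 0"
    and null: "\<forall>j. dec_left_mult I (K - {k0}) (eliminate a k0 i0) \<alpha> b (perturbed_comb R u c) j
                 + dec_left_mult I (K - {k0}) (eliminate a k0 i0) \<beta> b (perturbed_comb R v c) j = 0"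
  define c' where "c' = (\<lambda>i j. c i j
      - (if j = i0 then (a k0 i + (\<Sum>i'\<in>I. c i i' * a k0 i')) / a k0 i0 else 0))"
  have fR: "finite R" using assms(3,6) finite_subset by blast
  have shift: "pivot_shift I a k0 i0 (perturbed_comb R z c) = perturbed_comb R z c'" for z
    unfolding c'_def by (rule pivot_shift_perturbed_comb[OF assms(3) fR assms(6)])
  have "\<forall>i\<in>R. \<forall>j. j \<notin> insert i0 S \<longrightarrow> c' i j = 0" using supp by (simp add: c'_def)
  moreover have "\<forall>j. dec_left_mult I K a \<alpha> b (perturbed_comb R u c') j
                   + dec_left_mult I K a \<beta> b (perturbed_comb R v c') j = 0"
    using null by (simp add: dec_left_mult_eliminate[where a=a, OF assms(1-5)] shift)
  ultimately show "\<forall>i\<in>R. u i = 0 \<and> v i = 0"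
    using indep[unfolded dec_pairs_independent_def, rule_format, of c' u v] by blast
qed

(* After all rows of S are eliminated, the 2|R| functionals k |-> alpha_k a_k i and
   k |-> beta_k a_k i (i in R) are independent in F^K. *)
lemma substitution_base:
  fixes a :: "nat \<Rightarrow> nat \<Rightarrow> 'a::field"
  assumes "finite I" "R \<subseteq> I" "finite K" "dec_pairs_independent R {} I K a \<alpha> \<beta> b"
  shows "2 * card R \<le> card K"
proof -
  have fR: "finite R" using assms(1,2) finite_subset by blast
  define g where "g = (\<lambda>(i,t) k. (if t = (0::nat) then \<alpha> k else \<beta> k) * a k i)"
  have "card (R \<times> {0::nat,1}) \<le> card K"
  proof (rule card_le_of_independent[OF assms(3)])
    show "finite (R \<times> {0::nat,1})" using fR by simp
    show "\<forall>w. (\<forall>k\<in>K. (\<Sum>it\<in>R \<times> {0::nat,1}. w it * g it k) = 0) \<longrightarrow> (\<forall>it\<in>R \<times> {0::nat,1}. w it = 0)"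
    proof (intro allI impI)
      fix w assume null: "\<forall>k\<in>K. (\<Sum>it\<in>R \<times> {0::nat,1}. w it * g it k) = 0"
      define u where "u i = w (i,0)" for i
      define v where "v i = w (i,1)" for i
      have pairs: "(\<Sum>it\<in>R \<times> {0::nat,1}. F it) = (\<Sum>i\<in>R. F (i,0) + F (i,1))"
        for F :: "nat \<times> nat \<Rightarrow> 'a"
        using sum.cartesian_product[of "\<lambda>i t. F (i,t)" "{0::nat,1}" R] by (simp add: case_prod_eta)
      have dot: "(\<Sum>i\<in>I. perturbed_comb R z (\<lambda>_ _. 0) i * a k i) = (\<Sum>i\<in>R. z i * a k i)" for z k
        using perturbed_comb_dot[OF assms(1) fR assms(2), of z "\<lambda>_ _. 0" "a k"] by simp
      have "dec_left_mult I K a \<alpha> b (perturbed_comb R u (\<lambda>_ _. 0)) j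
          + dec_left_mult I K a \<beta> b (perturbed_comb R v (\<lambda>_ _. 0)) j = 0" for j
      proof -
        have "dec_left_mult I K a \<alpha> b (perturbed_comb R u (\<lambda>_ _. 0)) j
            + dec_left_mult I K a \<beta> b (perturbed_comb R v (\<lambda>_ _. 0)) j
           = (\<Sum>k\<in>K. (\<Sum>it\<in>R \<times> {0::nat,1}. w it * g it k) * b k j)"
          unfolding dec_left_mult_def dot pairs sum.distrib[symmetric] sum_distrib_right
          by (intro sum.cong refl)
            (simp add: g_def u_def v_def algebra_simps sum_distrib_left sum_distrib_right sum.distrib)
        also have "\<dots> = 0" using null by simp
        finally show ?thesis .
      qed
      then have "\<forall>i\<in>R. u i = 0 \<and> v i = 0"
        using assms(4)[unfolded dec_pairs_independent_def, rule_format, of "\<lambda>_ _. 0" u v] by simp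
      then show "\<forall>it\<in>R \<times> {0::nat,1}. w it = 0" by (auto simp: u_def v_def)
    qed
  qed
  then show ?thesis using fR by (simp add: card_cartesian_product)
qed

lemma substitution_bound:
  fixes a :: "nat \<Rightarrow> nat \<Rightarrow> 'a::field"
  assumes "finite S" "finite I" "S \<subseteq> I" "R \<subseteq> I" "S \<inter> R = {}" "finite K"
    and "dec_rows_independent S I K a \<alpha> b" "dec_pairs_independent R S I K a \<alpha> \<beta> b"
  shows "card S + 2 * card R \<le> card K"
  using assms
proof (induction S arbitrary: K a rule: finite_induct)
  case empty
  then show ?case using substitution_base by simp
next
  case (insert i0 S)
  have i0: "i0 \<in> I" "i0 \<notin> S" using insert.hyps(2) insert.prems(2) by auto
  obtain k0 where k0: "k0 \<in> K" "a k0 i0 \<noteq> 0"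
    using pivot_exists[OF insert.prems(1) i0(1) insert.prems(6)] by blast
  have "card S + 2 * card R \<le> card (K - {k0})"
  proof (rule insert.IH)
    show "dec_rows_independent S I (K - {k0}) (eliminate a k0 i0) \<alpha> b"
      using dec_rows_independent_eliminate[where a=a,
          OF insert.prems(5) k0(1) insert.prems(1) i0(1) k0(2) i0(2) insert.prems(6)] .
    show "dec_pairs_independent R S I (K - {k0}) (eliminate a k0 i0) \<alpha> \<beta> b"
      using dec_pairs_independent_eliminate[where a=a,
          OF insert.prems(5) k0(1) insert.prems(1) i0(1) k0(2) insert.prems(3) insert.prems(7)] .
  qed (use insert.prems in auto)
  moreover have "card K = Suc (card (K - {k0}))" using insert.prems(5) k0(1) by (rule card.remove)
  ultimately show ?case using insert.hyps by simp
qed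

definition decomposable :: "'a::field mat \<Rightarrow> 'a mat \<Rightarrow> nat \<Rightarrow> bool" where
  "decomposable A B r \<longleftrightarrow> (\<exists>(a :: nat \<Rightarrow> nat \<Rightarrow> 'a) (b :: nat \<Rightarrow> nat \<Rightarrow> 'a) \<alpha> \<beta>.
     (\<forall>k<r. (\<exists>i<dim_row A. a k i \<noteq> 0) \<and> (\<exists>j<dim_col A. b k j \<noteq> 0) \<and> (\<alpha> k, \<beta> k) \<noteq> (0, 0)) \<and>
     (\<forall>i<dim_row A. \<forall>j<dim_col A.
        A $$ (i, j) = (\<Sum>k<r. \<alpha> k * a k i * b k j) \<and>
        B $$ (i, j) = (\<Sum>k<r. \<beta> k * a k i * b k j)))"

lemma tensor_rank_Least: "tensor_rank A B = (LEAST r. decomposable A B r)"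
  unfolding tensor_rank_def decomposable_def ..

lemma dec_left_mult_matrix:
  fixes M :: "'a::field mat"
  assumes "\<forall>i<m. \<forall>j<n. M $$ (i,j) = (\<Sum>k<r. \<gamma> k * a k i * b k j)"
  shows "dec_left_mult {..<m} {..<r} a \<gamma> (\<lambda>k j. if j < n then b k j else 0) y j
       = (if j < n then (\<Sum>i<m. y i * M $$ (i,j)) else 0)"
proof (cases "j < n")
  case True
  have "dec_left_mult {..<m} {..<r} a \<gamma> (\<lambda>k j. if j < n then b k j else 0) y j
      = (\<Sum>k<r. \<Sum>i<m. y i * (\<gamma> k * a k i * b k j))"
    unfolding dec_left_mult_def using True by (simp add: sum_distrib_left sum_distrib_right mult_ac)
  also have "\<dots> = (\<Sum>i<m. \<Sum>k<r. y i * (\<gamma> k * a k i * b k j))" by (rule sum.swap)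
  also have "\<dots> = (\<Sum>i<m. y i * M $$ (i,j))"
    using assms True by (simp add: sum_distrib_left[symmetric])
  finally show ?thesis using True by simp
qed (simp add: dec_left_mult_def)

lemma decomposable_rows:
  fixes A B :: "'a::field mat"
  assumes dims: "dim_row A = m" "dim_col A = n" "l \<le> m"
    and A_indep: "row_independent A m n m" and B_indep: "row_independent B l n l"
    and B_low: "\<forall>i<m. \<forall>j<n. l \<le> i \<longrightarrow> B $$ (i,j) = 0"
  shows "decomposable A B (m + l)"
proof -
  define a :: "nat \<Rightarrow> nat \<Rightarrow> 'a" where
    "a k i = (if i = (if k < m then k else k - m) then 1 else 0)" for k i
  define b where "b k j = (if k < m then A $$ (k,j) else B $$ (k - m, j))" for k j
  define \<alpha> :: "nat \<Rightarrow> 'a" where "\<alpha> k = (if k < m then 1 else 0)" for k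
  define \<beta> :: "nat \<Rightarrow> 'a" where "\<beta> k = (if k < m then 0 else 1)" for k
  have nonzero: "(\<exists>i<m. a k i \<noteq> 0) \<and> (\<exists>j<n. b k j \<noteq> 0) \<and> (\<alpha> k, \<beta> k) \<noteq> (0, 0)"
    if k: "k < m + l" for k
  proof (cases "k < m")
    case True
    then show ?thesis
      using row_independent_nonzero_row[OF A_indep True True] by (auto simp: a_def b_def \<alpha>_def)
  next
    case False
    then have "k - m < l" using k by simp
    then show ?thesis
      using False row_independent_nonzero_row[OF B_indep] dims(3)
      by (auto simp: a_def b_def \<beta>_def intro!: exI[of _ "k - m"])
  qed
  have sums: "(\<Sum>k<m+l. \<alpha> k * a k i * b k j) = A $$ (i,j)"
    "(\<Sum>k<m+l. \<beta> k * a k i * b k j) = B $$ (i,j)" if "i < m" "j < n" for i j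
  proof -
    have "(\<Sum>k<m+l. \<alpha> k * a k i * b k j) = (\<Sum>k<m. \<alpha> k * a k i * b k j)"
      by (simp add: sum_lessThan_add \<alpha>_def)
    also have "\<dots> = (\<Sum>k<m. if k = i then A $$ (i,j) else 0)"
      by (intro sum.cong refl) (auto simp: \<alpha>_def a_def b_def)
    also have "\<dots> = A $$ (i,j)" using that by simp
    finally show "(\<Sum>k<m+l. \<alpha> k * a k i * b k j) = A $$ (i,j)" .
    have "(\<Sum>k<m+l. \<beta> k * a k i * b k j) = (\<Sum>k<l. \<beta> (m+k) * a (m+k) i * b (m+k) j)"
      by (simp add: sum_lessThan_add \<beta>_def)
    also have "\<dots> = (\<Sum>k<l. if k = i then B $$ (i,j) else 0)"
      by (intro sum.cong refl) (auto simp: \<beta>_def a_def b_def)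
    also have "\<dots> = B $$ (i,j)" using that B_low by (cases "i < l") simp_all
    finally show "(\<Sum>k<m+l. \<beta> k * a k i * b k j) = B $$ (i,j)" .
  qed
  show ?thesis
    unfolding decomposable_def dims(1,2)
    by (rule exI[of _ a], rule exI[of _ b], rule exI[of _ \<alpha>], rule exI[of _ \<beta>])
      (simp add: nonzero sums; simp add: \<alpha>_def \<beta>_def)
qed

lemma decomposition_rows_independent:
  fixes A :: "'a::field mat"
  assumes "S \<subseteq> {..<m}"
    and dec_A: "\<forall>i<m. \<forall>j<n. A $$ (i, j) = (\<Sum>k<r. \<alpha> k * a k i * b k j)"
    and A_indep: "row_independent A m n m"
  shows "dec_rows_independent S {..<m} {..<r} a \<alpha> (\<lambda>k j. if j < n then b k j else 0)"
  unfolding dec_rows_independent_def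
proof (intro allI impI)
  fix y i
  assume supp: "\<forall>i. i \<notin> S \<longrightarrow> y i = 0"
    and null: "\<forall>j. dec_left_mult {..<m} {..<r} a \<alpha> (\<lambda>k j. if j < n then b k j else 0) y j = 0"
  have "(\<Sum>i<m. y i * A $$ (i,j)) = 0" if "j < n" for j
    using null[rule_format, of j] that by (simp add: dec_left_mult_matrix[OF dec_A])
  then have "\<forall>i<m. y i = 0" using A_indep unfolding row_independent_def by blast
  then show "y i = 0" using supp assms(1) by (cases "i < m") auto
qed

(* The pair condition of the substitution bound for R = {..<l}, S = {..<m} - R: on the
   first p columns only A contributes, which kills the A-coefficients; what remains is a
   combination of the independent first l rows of B. *)
lemma decomposition_pairs_independent:
  fixes A B :: "'a::field mat"
  assumes dims: "l \<le> m" "p \<le> n"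
    and dec_A: "\<forall>i<m. \<forall>j<n. A $$ (i, j) = (\<Sum>k<r. \<alpha> k * a k i * b k j)"
    and dec_B: "\<forall>i<m. \<forall>j<n. B $$ (i, j) = (\<Sum>k<r. \<beta> k * a k i * b k j)"
    and A_left: "row_independent A m p l" and B_left: "\<forall>i<m. \<forall>j<p. B $$ (i,j) = 0"
    and B_indep: "row_independent B l n l" and B_low: "\<forall>i<m. \<forall>j<n. l \<le> i \<longrightarrow> B $$ (i,j) = 0"
  shows "dec_pairs_independent {..<l} {l..<m} {..<m} {..<r} a \<alpha> \<beta> (\<lambda>k j. if j < n then b k j else 0)"
  unfolding dec_pairs_independent_def
proof (intro allI impI)
  fix c u v
  let ?b = "\<lambda>k j. if j < n then b k j else 0"
  assume supp: "\<forall>i\<in>{..<l}. \<forall>j. j \<notin> {l..<m} \<longrightarrow> c i j = 0"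
    and null: "\<forall>j. dec_left_mult {..<m} {..<r} a \<alpha> ?b (perturbed_comb {..<l} u c) j
                   + dec_left_mult {..<m} {..<r} a \<beta> ?b (perturbed_comb {..<l} v c) j = 0"
  have head: "perturbed_comb {..<l} w c i = w i" if "i < l" for w i
  proof -
    have "(\<Sum>i'<l. w i' * c i' i) = 0" using supp that by (intro sum.neutral) auto
    then show ?thesis using that by (simp add: perturbed_comb_def)
  qed
  have null_j: "(\<Sum>i<m. perturbed_comb {..<l} u c i * A $$ (i,j))
      + (\<Sum>i<m. perturbed_comb {..<l} v c i * B $$ (i,j)) = 0" if "j < n" for j
    using null[rule_format, of j] that
    by (simp add: dec_left_mult_matrix[OF dec_A] dec_left_mult_matrix[OF dec_B])
  have "(\<Sum>i<m. perturbed_comb {..<l} u c i * A $$ (i,j)) = 0" if "j < p" for j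
    using null_j[of j] B_left that dims(2) by simp
  then have "\<forall>i<l. perturbed_comb {..<l} u c i = 0"
    using A_left unfolding row_independent_def by blast
  then have u0: "\<forall>i<l. u i = 0" using head by simp
  then have "perturbed_comb {..<l} u c = (\<lambda>_. 0)" by (auto simp: perturbed_comb_def)
  moreover have "(\<Sum>i<m. perturbed_comb {..<l} v c i * B $$ (i,j)) = (\<Sum>i<l. v i * B $$ (i,j))"
    if "j < n" for j
  proof -
    have "(\<Sum>i<m. perturbed_comb {..<l} v c i * B $$ (i,j))
        = (\<Sum>i<m. if i < l then v i * B $$ (i,j) else 0)"
      using that B_low by (intro sum.cong refl) (auto simp: head)
    also have "\<dots> = (\<Sum>i<l. v i * B $$ (i,j))" using dims(1) by (rule sum_lessThan_if_less)
    finally show ?thesis .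
  qed
  ultimately have "\<forall>j<n. (\<Sum>i<l. v i * B $$ (i,j)) = 0" using null_j by simp
  then have "\<forall>i<l. v i = 0" using B_indep unfolding row_independent_def by blast
  then show "\<forall>i\<in>{..<l}. u i = 0 \<and> v i = 0" using u0 by simp
qed

lemma decomposable_lower_bound:
  fixes A B :: "'a::field mat"
  assumes dims: "dim_row A = m" "dim_col A = n" "l \<le> m" "p \<le> n"
    and A_indep: "row_independent A m n m"
    and A_left: "row_independent A m p l" and B_left: "\<forall>i<m. \<forall>j<p. B $$ (i,j) = 0"
    and B_indep: "row_independent B l n l" and B_low: "\<forall>i<m. \<forall>j<n. l \<le> i \<longrightarrow> B $$ (i,j) = 0"
    and dec: "decomposable A B r"
  shows "m + l \<le> r"
proof -
  obtain a b \<alpha> \<beta> where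
    dec_A: "\<forall>i<m. \<forall>j<n. A $$ (i, j) = (\<Sum>k<r. \<alpha> k * a k i * b k j)" and
    dec_B: "\<forall>i<m. \<forall>j<n. B $$ (i, j) = (\<Sum>k<r. \<beta> k * a k i * b k j)"
    using dec dims(1,2) unfolding decomposable_def by blast
  have "card {l..<m} + 2 * card {..<l} \<le> card {..<r}"
  proof (rule substitution_bound)
    show "dec_rows_independent {l..<m} {..<m} {..<r} a \<alpha> (\<lambda>k j. if j < n then b k j else 0)"
      by (rule decomposition_rows_independent[OF _ dec_A A_indep]) auto
    show "dec_pairs_independent {..<l} {l..<m} {..<m} {..<r} a \<alpha> \<beta> (\<lambda>k j. if j < n then b k j else 0)"
      by (rule decomposition_pairs_independent[OF dims(3,4) dec_A dec_B A_left B_left B_indep B_low])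
  qed (use dims(3) in auto)
  then show ?thesis using dims(3) by simp
qed

lemma tensor_rank_row_pattern:
  fixes A B :: "'a::field mat"
  assumes dims: "dim_row A = m" "dim_col A = n" "l \<le> m" "p \<le> n"
    and A_indep: "row_independent A m n m"
    and A_left: "row_independent A m p l" and B_left: "\<forall>i<m. \<forall>j<p. B $$ (i,j) = 0"
    and B_indep: "row_independent B l n l" and B_low: "\<forall>i<m. \<forall>j<n. l \<le> i \<longrightarrow> B $$ (i,j) = 0"
  shows "tensor_rank A B = m + l"
  unfolding tensor_rank_Least
proof (rule Least_equality)
  show "decomposable A B (m + l)"
    by (rule decomposable_rows[OF dims(1-3) A_indep B_indep B_low])
  show "m + l \<le> r" if "decomposable A B r" for r
    by (rule decomposable_lower_bound[OF assms that])
qed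

lemma blockA_entries:
  fixes X11 X12 X22 :: "'a::zero mat"
  assumes "X11 \<in> carrier_mat (n-l) (n-l)" "X12 \<in> carrier_mat (n-l) (m+l-n)"
    "X22 \<in> carrier_mat (m+l-n) (m+l-n)" "m \<le> n" "n - m \<le> l" "l \<le> n"
  shows "dim_row (blockA m n l X11 X12 X22) = m" "dim_col (blockA m n l X11 X12 X22) = n"
    and "i < m \<Longrightarrow> j < n \<Longrightarrow> blockA m n l X11 X12 X22 $$ (i,j) =
      (if j < m then
         (if i < n-l then (if j < n-l then X11 $$ (i,j) else X12 $$ (i, j-(n-l)))
          else (if j < n-l then 0 else X22 $$ (i-(n-l), j-(n-l))))
       else 0)"
  using assms by (auto simp: blockA_def)

lemma blockB_entries:
  fixes Y :: "'a::zero mat"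
  assumes "Y \<in> carrier_mat l l" "l \<le> m" "l \<le> n" "i < m" "j < n"
  shows "blockB m n l Y $$ (i,j) = (if i < l \<and> n-l \<le> j then Y $$ (i, j-(n-l)) else 0)"
  using assms by (auto simp: blockB_def)

lemma tensor_rank_block_pencil:
  fixes X11 X12 X22 Y :: "'a::field mat"
  assumes dims: "m \<le> n" "n - m \<le> l" "l \<le> n div 2"
    and X11: "X11 \<in> carrier_mat (n-l) (n-l)" "invertible_mat X11"
    and X22: "X22 \<in> carrier_mat (m+l-n) (m+l-n)" "invertible_mat X22"
    and Y: "Y \<in> carrier_mat l l" "invertible_mat Y"
    and X12: "X12 \<in> carrier_mat (n-l) (m+l-n)"
  shows "tensor_rank (blockA m n l X11 X12 X22) (blockB m n l Y) = m + l"
proof -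
  define A where "A = blockA m n l X11 X12 X22"
  define B where "B = blockB m n l Y"
  define p where "p = n - l"
  define q where "q = m + l - n"
  have pq: "p + q = m" "l \<le> p" "p + l = n" "l \<le> m" "q \<le> l"
    using dims by (auto simp: p_def q_def)
  have A_dims: "dim_row A = m" "dim_col A = n"
    using blockA_entries[OF X11(1) X12 X22(1)] dims unfolding A_def by auto
  have A_entry: "A $$ (i,j) = (if j < m then (if i < p then (if j < p then X11 $$ (i,j)
      else X12 $$ (i,j-p)) else (if j < p then 0 else X22 $$ (i-p,j-p))) else 0)"
    if "i < m" "j < n" for i j
    using blockA_entries(3)[OF X11(1) X12 X22(1)] dims that unfolding A_def p_def by auto
  have B_entry: "B $$ (i,j) = (if i < l \<and> p \<le> j then Y $$ (i,j-p) else 0)"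
    if "i < m" "j < n" for i j
    using blockB_entries[OF Y(1)] pq that unfolding B_def p_def by auto
  have A_left: "row_independent A m p p"
    using row_independent_block[OF X11[folded p_def], of m A 0] pq A_entry by simp
  have "row_independent A m m m"
    unfolding pq(1)[symmetric]
    by (rule row_independent_block_triangular[OF _ X22[folded q_def]])
      (use A_left pq A_entry in auto)
  then have A_indep: "row_independent A m n m"
    by (rule row_independent_mono) (use dims(1) in auto)
  have B_indep: "row_independent B l n l"
    using row_independent_block[OF Y, of l B p] pq B_entry by simp
  show ?thesis
    unfolding A_def[symmetric] B_def[symmetric]
  proof (rule tensor_rank_row_pattern[OF A_dims pq(4) _ A_indep _ _ B_indep])
    show "p \<le> n" "row_independent A m p l"
      using pq row_independent_mono[OF A_left] by auto
    show "\<forall>i<m. \<forall>j<p. B $$ (i,j) = 0" "\<forall>i<m. \<forall>j<n. l \<le> i \<longrightarrow> B $$ (i,j) = 0"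
      using B_entry pq by auto
  qed
qed

theorem mainTheorem7:
  fixes m n l :: nat
  assumes "m \<le> n" and "n \<le> 2 * m" and "n - m \<le> l" and "l \<le> n div 2"
  shows "(\<forall>(X11 :: real mat) X12 X22 Y.
            X11 \<in> carrier_mat (n - l) (n - l) \<and> invertible_mat X11 \<and>
            X22 \<in> carrier_mat (m + l - n) (m + l - n) \<and> invertible_mat X22 \<and>
            Y \<in> carrier_mat l l \<and> invertible_mat Y \<and>
            X12 \<in> carrier_mat (n - l) (m + l - n) \<longrightarrow>
            tensor_rank (blockA m n l X11 X12 X22) (blockB m n l Y) = m + l)
       \<and> (\<forall>(X11 :: complex mat) X12 X22 Y.
            X11 \<in> carrier_mat (n - l) (n - l) \<and> invertible_mat X11 \<and>
            X22 \<in> carrier_mat (m + l - n) (m + l - n) \<and> invertible_mat X22 \<and>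
            Y \<in> carrier_mat l l \<and> invertible_mat Y \<and>
            X12 \<in> carrier_mat (n - l) (m + l - n) \<longrightarrow>
            tensor_rank (blockA m n l X11 X12 X22) (blockB m n l Y) = m + l)"
  by (intro conjI allI impI; elim conjE; rule tensor_rank_block_pencil[OF assms(1,3,4)])

end
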